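(* Let $0<\bar\varepsilon<\varrho<\frac12$, let $H$ be a special atom, and let $\rho^-,\rho^+:\mathbb{R}^2\to[0,1]$ be CPwL maps such that \[ \rho^-(E(t))=t\ \text{ for } t\in[\bar\varepsilon,1],\qquad \rho^+(E(t))=t\ \text{ for } t\in[0,1-\bar\varepsilon]. \] For $\sigma,\tau\in\{-,+\}$ let $\rho^{\sigma,\tau}(z_1,z_2)=(\rho^\sigma(z_1),\rho^\tau(z_2))$ for $z_1,z_2\in\mathbb{R}^2$. Let $F$ be a CPwL map with $F(E(t))=E(r(t))$ on $[0,1]$ and let $z_n(x,y)=\bigl(F^n(E(x)),F^n(E(y))\bigr)$. Then for every $n\ge1$ and every $(x,y)\in[0,1]^2$, \[ H(R_n(x,y))=\min_{\sigma,\tau\in\{-,+\}} H\bigl(\rho^{\sigma,\tau}(z_n(x,y))\bigr). \] Consequently there exist constants $C_0,C_1>0$, independent of $n$ (depending only on $\bar\varepsilon,\varrho$, the maps $\rho^\pm,F,E$ and the local complexity of $H$), such that the function $(x,y)\mapsto H(R_n(x,y))$ on $[0,1]^2$ is the restriction of a network in $\Upsilon_{C_0,\,C_1 n}(\mathrm{ReLU};2,1)$ for all $n\ge1$.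
   Context: For integers $W,L,d,N\ge 1$, $\Upsilon_{W,L}(\mathrm{ReLU};d,N)$ denotes the set of functions $\mathbb{R}^d\to\mathbb{R}^N$ realized (exactly) by fully connected feed-forward ReLU networks of width $W$ and depth $L$. CPwL means continuous piecewise linear. $r:[0,1]\to[0,1]$ is $r(t)=2t-\lfloor 2t\rfloor$ for $t\in[0,1)$, $r(1)=1$; $R(x,y)=(r(x),r(y))$, $R_n=R^n$. $E:[0,1]\to\mathbb{R}^2$ is $E(t)=(3t,3t)$ for $0\le t\le\frac13$, $E(t)=(1,2-3t)$ for $\frac13\le t\le\frac23$, $E(t)=(3-3t,0)$ for $\frac23\le t\le1$. Special atom: for fixed $0<\varrho<\frac12$, a special atom is a compactly supported nonnegative CPwL function $H:\mathbb{R}^2\to[0,\infty)$ with $\operatorname{supp}H\subset[\varrho,1-\varrho]^2$. *)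

theory Defs
  imports "HOL-Analysis.Analysis"
begin

definition cpwl :: "('a::euclidean_space \<Rightarrow> 'b::real_normed_vector) \<Rightarrow> bool" where
  "cpwl f \<longleftrightarrow> continuous_on UNIV f \<and>
     (\<exists>\<P>. finite \<P> \<and> \<Union>\<P> = UNIV \<and>
        (\<forall>P\<in>\<P>. polyhedron P \<and> (\<exists>l c. linear l \<and> (\<forall>x\<in>P. f x = l x + c))))"

definition r_map :: "real \<Rightarrow> real" where
  "r_map t = (if t = 1 then 1 else 2 * t - of_int \<lfloor>2 * t\<rfloor>)"

definition R_map :: "real \<times> real \<Rightarrow> real \<times> real" where
  "R_map p = (r_map (fst p), r_map (snd p))"

text \<open>The curve E : [0,1] -> R^2 (only its values on [0,1] are relevant).\<close>
definition E_map :: "real \<Rightarrow> real \<times> real" where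
  "E_map t = (if t \<le> 1/3 then (3 * t, 3 * t)
              else if t \<le> 2/3 then (1, 2 - 3 * t)
              else (3 - 3 * t, 0))"

definition special_atom :: "real \<Rightarrow> (real \<times> real \<Rightarrow> real) \<Rightarrow> bool" where
  "special_atom \<rho> H \<longleftrightarrow> cpwl H \<and> (\<forall>z. 0 \<le> H z) \<and>
     compact (closure {z. H z \<noteq> 0}) \<and>
     closure {z. H z \<noteq> 0} \<subseteq> cbox (\<rho>, \<rho>) (1 - \<rho>, 1 - \<rho>)"

text \<open>Vectors are functions nat => real,
with only the first (dimension) many coordinates relevant. A network of width W and
depth L has L hidden layers, each with exactly W ReLU neurons, followed by an affine
output layer.\<close>
definition relu :: "real \<Rightarrow> real" where
  "relu t = max 0 t"

definition relu_layer :: "nat \<Rightarrow> (nat \<Rightarrow> nat \<Rightarrow> real) \<Rightarrow> (nat \<Rightarrow> real) \<Rightarrow> (nat \<Rightarrow> real) \<Rightarrow> (nat \<Rightarrow> real)" where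
  "relu_layer m A b v = (\<lambda>i. relu ((\<Sum>j<m. A i j * v j) + b i))"

fun hidden_layers :: "nat \<Rightarrow> nat \<Rightarrow> ((nat \<Rightarrow> nat \<Rightarrow> real) \<times> (nat \<Rightarrow> real)) list \<Rightarrow> (nat \<Rightarrow> real) \<Rightarrow> (nat \<Rightarrow> real)" where
  "hidden_layers m W [] v = v"
| "hidden_layers m W ((A, b) # ls) v = hidden_layers W W ls (relu_layer m A b v)"

text \<open>Upsilon_{W,L}(ReLU; d, N): realized functions R^d -> R^N (output coordinates >= N are 0).\<close>
definition relu_nets :: "nat \<Rightarrow> nat \<Rightarrow> nat \<Rightarrow> nat \<Rightarrow> ((nat \<Rightarrow> real) \<Rightarrow> (nat \<Rightarrow> real)) set" where
  "relu_nets W L d N =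
     {g. \<exists>ls C c. length ls = L \<and>
        g = (\<lambda>x i. if i < N
                   then (\<Sum>j<W. C i j * hidden_layers d W ls x j) + c i
                   else 0)}"

definition vec2 :: "real \<Rightarrow> real \<Rightarrow> (nat \<Rightarrow> real)" where
  "vec2 x y = (\<lambda>i. if i = 0 then x else if i = 1 then y else 0)"

end

theory Submission
  imports Defs
begin

(* On [0,1] the map F^n acts on the curve E as the n-fold doubling map: F^n(E t) = E(r^n t).
   The retraction rho- undoes E on [eps,1] and rho+ on [0,1-eps], so at every point of [0,1]
   at least one of them is exact, and both are exact on [rho,1-rho], which contains the support
   of H.  Since H >= 0 vanishes off its support, H(a,b) is the minimum of the four values
   H(rho_sigma(E a), rho_tau(E b)).
   For the network bound, a continuous piecewise affine function is a max of mins of its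
   affine pieces, so every CPwL map R^2 -> R is computed by a fixed ReLU network.  Composing
   a fixed network for (x,y) |-> (E x, E y), n copies of a fixed network for F x F and a fixed
   network for the minimum above gives constant width and depth linear in n. *)

section \<open>Max-min representation of continuous piecewise affine functions\<close>

definition affine_fun :: "('a::real_vector \<Rightarrow> real) \<Rightarrow> bool" where
  "affine_fun p \<longleftrightarrow> (\<exists>l c. linear l \<and> p = (\<lambda>z. l z + c))"

lemma affine_fun_on_segment:
  assumes "affine_fun p"
  shows "p (y + t *\<^sub>R (x - y)) = p y + (p x - p y) * t"
proof -
  obtain l c where "linear l" "p = (\<lambda>z. l z + c)" using assms unfolding affine_fun_def by blast
  thus ?thesis by (simp add: linear_add linear_diff linear_scale algebra_simps)
qed

lemma affine_cover_piece_through_right_limit: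
  fixes g :: "real \<Rightarrow> real" and a b :: "'i \<Rightarrow> real"
  assumes fin: "finite I" and cont: "continuous_on UNIV g"
    and cover: "\<And>t. t \<in> {0..1} \<Longrightarrow> \<exists>i\<in>I. g t = a i + b i * t"
    and t0: "0 \<le> t0" "t0 < 1"
  obtains j t1 where "j \<in> I" "t0 < t1" "t1 \<le> 1" "g t0 = a j + b j * t0" "g t1 = a j + b j * t1"
proof -
  define K where "K j = {t\<in>{t0<..1}. g t = a j + b j * t}" for j
  have "{t0<..1} \<subseteq> (\<Union>j\<in>I. K j)"
  proof
    fix t assume "t \<in> {t0<..1}"
    then obtain i where "i \<in> I" "g t = a i + b i * t" using cover[of t] t0 by auto
    thus "t \<in> (\<Union>j\<in>I. K j)" using \<open>t \<in> {t0<..1}\<close> by (auto simp: K_def)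
  qed
  also have "\<dots> \<subseteq> (\<Union>j\<in>I. closure (K j))" using closure_subset by blast
  finally have "closure {t0<..1} \<subseteq> (\<Union>j\<in>I. closure (K j))"
    using fin by (intro closure_minimal closed_UN) auto
  moreover have "t0 \<in> closure {t0<..1}" using t0 by simp
  ultimately obtain j where j: "j \<in> I" "t0 \<in> closure (K j)" by blast
  have "closure (K j) \<subseteq> {t. g t = a j + b j * t}"
    by (intro closure_minimal closed_Collect_eq cont continuous_intros) (auto simp: K_def)
  moreover obtain t1 where "t1 \<in> K j" using j(2) closure_empty by fastforce
  ultimately show thesis using that j by (auto simp: K_def)
qed

lemma affine_cover_crossing_piece_unit_interval:
  fixes g :: "real \<Rightarrow> real" and a b :: "'i \<Rightarrow> real"
  assumes fin: "finite I" and cont: "continuous_on UNIV g"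
    and cover: "\<And>t. t \<in> {0..1} \<Longrightarrow> \<exists>i\<in>I. g t = a i + b i * t"
  shows "\<exists>i\<in>I. g 0 \<le> a i \<and> a i + b i \<le> g 1"
proof (rule ccontr)
  assume no_crossing: "\<not> ?thesis"
  define G where "G = {i\<in>I. g 0 \<le> a i}"
  define S where "S = {t\<in>{0..1}. \<exists>i\<in>G. a i + b i * t \<le> g t}"
  define t0 where "t0 = Sup S"
  have "0 \<in> S" using cover[of 0] by (auto simp: S_def G_def)
  moreover have "closed S"
  proof -
    have "S = {0..1} \<inter> (\<Union>i\<in>G. {t. a i + b i * t \<le> g t})" by (auto simp: S_def)
    moreover have "finite G" using fin by (simp add: G_def)
    ultimately show ?thesis
      by (simp only:) (intro closed_Int closed_UN closed_atLeastAtMost ballI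
          closed_Collect_le cont continuous_intros)
  qed
  moreover have bdd: "bdd_above S" by (auto simp: S_def bdd_above_def)
  ultimately have "t0 \<in> S" unfolding t0_def using closed_contains_Sup by blast
  then obtain i where i: "i \<in> G" "a i + b i * t0 \<le> g t0" and "0 \<le> t0" "t0 \<le> 1"
    by (auto simp: S_def)
  have above: "g t < a k + b k * t" if "k \<in> G" "t0 < t" "t \<le> 1" for k t
  proof (rule ccontr)
    assume "\<not> g t < a k + b k * t"
    hence "t \<in> S" using that \<open>0 \<le> t0\<close> by (auto simp: S_def not_less)
    thus False using cSup_upper[OF _ bdd, of t] that(2) by (simp add: t0_def)
  qed
  have "t0 \<noteq> 1" using i no_crossing by (auto simp: G_def)
  then obtain j t1 where j: "j \<in> I" "t0 < t1" "t1 \<le> 1"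
      "g t0 = a j + b j * t0" "g t1 = a j + b j * t1"
    using affine_cover_piece_through_right_limit[OF fin cont cover \<open>0 \<le> t0\<close>] \<open>t0 \<le> 1\<close>
    by (metis order_less_le)
  have "j \<notin> G" using above[of j t1] j by auto
  \<comment> \<open>the line of i lies above that of j at 0 but not at t0, so it lies strictly below it at t1\<close>
  hence "a j < a i" using i(1) j(1) by (auto simp: G_def)
  moreover have "a i + b i * t0 \<le> a j + b j * t0" using i(2) j(4) by simp
  ultimately have "b i < b j"
    using \<open>0 \<le> t0\<close> mult_right_mono[of "b j" "b i" t0] by (cases "b i < b j") auto
  hence "(b i - b j) * (t1 - t0) < 0" using j(2) by (simp add: mult_neg_pos)
  hence "a i + b i * t1 < a j + b j * t1"
    using \<open>a i + b i * t0 \<le> a j + b j * t0\<close> by (simp add: algebra_simps)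
  thus False using above[OF i(1) j(2,3)] j(5) by simp
qed

lemma affine_cover_crossing_piece:
  fixes h :: "'a::real_normed_vector \<Rightarrow> real"
  assumes fin: "finite A" and aff: "\<forall>p\<in>A. affine_fun p" and cont: "continuous_on UNIV h"
    and cover: "\<And>z. \<exists>p\<in>A. h z = p z"
  shows "\<exists>p\<in>A. h y \<le> p y \<and> p x \<le> h x"
proof -
  define g where "g t = h (y + t *\<^sub>R (x - y))" for t
  have "continuous_on UNIV g"
    unfolding g_def by (intro continuous_on_compose2[OF cont] continuous_intros) auto
  moreover have "\<exists>p\<in>A. g t = p y + (p x - p y) * t" for t
  proof -
    obtain p where "p \<in> A" "g t = p (y + t *\<^sub>R (x - y))" using cover unfolding g_def by blast
    moreover have "p (y + t *\<^sub>R (x - y)) = p y + (p x - p y) * t"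
      using aff \<open>p \<in> A\<close> by (intro affine_fun_on_segment) blast
    ultimately show ?thesis by auto
  qed
  ultimately have "\<exists>p\<in>A. g 0 \<le> p y \<and> p y + (p x - p y) \<le> g 1"
    by (rule affine_cover_crossing_piece_unit_interval[OF fin])
  thus ?thesis by (simp add: g_def)
qed

lemma affine_cover_max_min:
  fixes h :: "'a::real_normed_vector \<Rightarrow> real"
  assumes fin: "finite A" and aff: "\<forall>p\<in>A. affine_fun p" and cont: "continuous_on UNIV h"
    and cover: "\<And>z. \<exists>p\<in>A. h z = p z"
  shows "h z = Max ((\<lambda>T. Min ((\<lambda>p. p z) ` T)) ` range (\<lambda>y. {p\<in>A. h y \<le> p y}))"
proof (rule sym, rule Max_eqI)
  have "range (\<lambda>y. {p\<in>A. h y \<le> p y}) \<subseteq> Pow A" by blast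
  hence "finite (range (\<lambda>y. {p\<in>A. h y \<le> p y}))" by (rule finite_subset) (simp add: fin)
  thus "finite ((\<lambda>T. Min ((\<lambda>p. p z) ` T)) ` range (\<lambda>y. {p\<in>A. h y \<le> p y}))" by simp
next
  fix v assume "v \<in> (\<lambda>T. Min ((\<lambda>p. p z) ` T)) ` range (\<lambda>y. {p\<in>A. h y \<le> p y})"
  then obtain y where v: "v = Min ((\<lambda>p. p z) ` {p\<in>A. h y \<le> p y})" by blast
  obtain p where p: "p \<in> A" "h y \<le> p y" "p z \<le> h z"
    using affine_cover_crossing_piece[OF fin aff cont cover] by blast
  have "v \<le> p z" unfolding v by (rule Min_le) (use fin p in auto)
  thus "v \<le> h z" using p(3) by simp
next
  obtain p where p: "p \<in> A" "h z = p z" using cover by blast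
  have "Min ((\<lambda>p. p z) ` {p\<in>A. h z \<le> p z}) = h z"
  proof (rule Min_eqI)
    show "finite ((\<lambda>p. p z) ` {p\<in>A. h z \<le> p z})" using fin by simp
    show "h z \<in> (\<lambda>p. p z) ` {p\<in>A. h z \<le> p z}" using p by force
  qed blast
  hence "h z = (\<lambda>T. Min ((\<lambda>p. p z) ` T)) ((\<lambda>y. {p\<in>A. h y \<le> p y}) z)" by simp
  thus "h z \<in> (\<lambda>T. Min ((\<lambda>p. p z) ` T)) ` range (\<lambda>y. {p\<in>A. h y \<le> p y})"
    by (rule image_eqI) (rule rangeI)
qed

lemma cpwl_affine_cover:
  fixes F :: "'a::euclidean_space \<Rightarrow> 'b::real_normed_vector" and \<pi> :: "'b \<Rightarrow> real"
  assumes "cpwl F" "linear \<pi>"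
  obtains A where "finite A" "\<forall>p\<in>A. affine_fun p" "\<And>z. \<exists>p\<in>A. \<pi> (F z) = p z"
proof -
  obtain \<P> where P: "finite \<P>" "\<Union>\<P> = UNIV"
      "\<forall>P\<in>\<P>. polyhedron P \<and> (\<exists>l c. linear l \<and> (\<forall>x\<in>P. F x = l x + c))"
    using assms(1) unfolding cpwl_def by (elim conjE exE) (rule that)
  then obtain lc where lc: "\<And>P. P \<in> \<P> \<Longrightarrow> linear (fst (lc P)) \<and> (\<forall>x\<in>P. F x = fst (lc P) x + snd (lc P))"
    using bchoice[of \<P> "\<lambda>P lc. linear (fst lc) \<and> (\<forall>x\<in>P. F x = fst lc x + snd lc)"]
    by fastforce
  define piece where "piece P z = \<pi> (fst (lc P) z) + \<pi> (snd (lc P))" for P z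
  have aff: "affine_fun (piece P)" if "P \<in> \<P>" for P
    unfolding affine_fun_def piece_def
    using linear_compose[OF conjunct1[OF lc[OF that]] assms(2)]
    by (intro exI[of _ "\<lambda>z. \<pi> (fst (lc P) z)"] exI[of _ "\<pi> (snd (lc P))"]) (simp add: o_def)
  have cover: "\<exists>P\<in>\<P>. \<pi> (F z) = piece P z" for z
  proof -
    obtain P where "P \<in> \<P>" "z \<in> P" using P(2) by blast
    hence "F z = fst (lc P) z + snd (lc P)" using lc by blast
    hence "\<pi> (F z) = piece P z" by (simp add: piece_def linear_add[OF assms(2)])
    thus ?thesis using \<open>P \<in> \<P>\<close> by blast
  qed
  show thesis
  proof (rule that[of "piece ` \<P>"])
    show "finite (piece ` \<P>)" using P(1) by simp
    show "\<forall>p\<in>piece ` \<P>. affine_fun p" using aff by blast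
    show "\<exists>p\<in>piece ` \<P>. \<pi> (F z) = p z" for z using cover[of z] by blast
  qed
qed

section \<open>Calculus of ReLU networks\<close>

type_synonym layer = "(nat \<Rightarrow> nat \<Rightarrow> real) \<times> (nat \<Rightarrow> real)"

lemma hidden_layers_Cons:
  "hidden_layers m W (l # ls) v = hidden_layers W W ls (relu_layer m (fst l) (snd l) v)"
  by (cases l) simp

lemma hidden_layers_append:
  "xs \<noteq> [] \<Longrightarrow> hidden_layers m W (xs @ ys) v = hidden_layers W W ys (hidden_layers m W xs v)"
proof (induction xs arbitrary: m v)
  case (Cons l xs)
  thus ?case by (cases "xs = []") (simp_all add: hidden_layers_Cons)
qed simp

lemma hidden_layers_nonneg: "ls \<noteq> [] \<Longrightarrow> 0 \<le> hidden_layers m W ls v j"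
proof (induction ls arbitrary: m v)
  case (Cons l ls)
  thus ?case by (cases "ls = []") (simp_all add: hidden_layers_Cons relu_layer_def relu_def)
qed simp

definition id_layer :: layer where
  "id_layer = ((\<lambda>i j. if i = j then 1 else 0), (\<lambda>i. 0))"

lemma hidden_layers_id_layers:
  "(\<And>j. 0 \<le> v j) \<Longrightarrow> j < W \<Longrightarrow> hidden_layers W W (replicate k id_layer) v j = v j"
proof (induction k arbitrary: v)
  case (Suc k)
  define v' where "v' = relu_layer W (fst id_layer) (snd id_layer) v"
  have "v' j = v j" using Suc.prems
    by (simp add: v'_def relu_layer_def id_layer_def if_distrib[of "\<lambda>c. c * _"] relu_def
        max_absorb2 cong: if_cong)
  moreover have "0 \<le> v' i" for i by (simp add: v'_def relu_layer_def relu_def)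
  ultimately show ?case using Suc.IH[of v'] Suc.prems by (simp add: hidden_layers_Cons v'_def)
qed simp

(* Only the outputs i < N are prescribed, and at least one hidden layer is required: then
   the hidden activations are nonnegative, so identity layers can pad the depth. *)
definition net_realizes ::
    "nat \<Rightarrow> nat \<Rightarrow> nat \<Rightarrow> nat \<Rightarrow> ((nat \<Rightarrow> real) \<Rightarrow> (nat \<Rightarrow> real)) \<Rightarrow> bool" where
  "net_realizes W L d N f \<longleftrightarrow> 1 \<le> L \<and> (\<exists>ls C c. length ls = L \<and>
     (\<forall>x. \<forall>i<N. f x i = (\<Sum>j<W. C i j * hidden_layers d W ls x j) + c i))"

lemma net_realizes_cong:
  "net_realizes W L d N f \<Longrightarrow> (\<And>x i. i < N \<Longrightarrow> f x i = g x i) \<Longrightarrow> net_realizes W L d N g"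
  unfolding net_realizes_def by metis

lemma net_realizes_relu_nets:
  assumes "net_realizes W L d N f"
  obtains g where "g \<in> relu_nets W L d N" "\<And>x i. i < N \<Longrightarrow> g x i = f x i"
proof -
  obtain ls C c where "length ls = L"
    and f: "\<forall>x. \<forall>i<N. f x i = (\<Sum>j<W. C i j * hidden_layers d W ls x j) + c i"
    using assms unfolding net_realizes_def by blast
  hence "(\<lambda>x i. if i < N then (\<Sum>j<W. C i j * hidden_layers d W ls x j) + c i else 0)
           \<in> relu_nets W L d N"
    unfolding relu_nets_def by blast
  thus thesis using that f by simp
qed

lemma net_realizes_single_layer:
  "net_realizes W 1 d N (\<lambda>x i. (\<Sum>k<W. C i k * relu ((\<Sum>j<d. A k j * x j) + b k)) + c i)"
  unfolding net_realizes_def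
  by (intro conjI exI[of _ "[(A, b)]"] exI[of _ C] exI[of _ c]) (simp_all add: relu_layer_def)

lemma net_realizes_deepen:
  assumes "net_realizes W L d N f" "L \<le> L'"
  shows "net_realizes W L' d N f"
proof -
  obtain ls C c where ls: "length ls = L" "1 \<le> L"
    and f: "\<forall>x. \<forall>i<N. f x i = (\<Sum>j<W. C i j * hidden_layers d W ls x j) + c i"
    using assms(1) unfolding net_realizes_def by blast
  have "ls \<noteq> []" using ls by auto
  hence "hidden_layers d W (ls @ replicate (L' - L) id_layer) x j = hidden_layers d W ls x j"
    if "j < W" for x j
    using hidden_layers_append hidden_layers_id_layers[OF hidden_layers_nonneg that] by simp
  hence "\<forall>x. \<forall>i<N. f x i = (\<Sum>j<W. C i j * hidden_layers d W (ls @ replicate (L' - L) id_layer) x j) + c i"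
    using f by simp
  moreover have "length (ls @ replicate (L' - L) id_layer) = L'" using ls assms(2) by simp
  ultimately show ?thesis using ls assms(2) unfolding net_realizes_def by (meson order_trans)
qed

lemma net_realizes_comp:
  assumes "net_realizes W L1 d M f" "net_realizes W L2 M N g"
  shows "net_realizes W (L1 + L2) d N (\<lambda>x. g (f x))"
proof -
  obtain ls1 C1 c1 where l1: "length ls1 = L1" "1 \<le> L1"
    and f: "\<forall>x. \<forall>i<M. f x i = (\<Sum>j<W. C1 i j * hidden_layers d W ls1 x j) + c1 i"
    using assms(1) unfolding net_realizes_def by blast
  obtain ls2 C2 c2 where l2: "length ls2 = L2" "1 \<le> L2"
    and g: "\<forall>x. \<forall>i<N. g x i = (\<Sum>j<W. C2 i j * hidden_layers M W ls2 x j) + c2 i"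
    using assms(2) unfolding net_realizes_def by blast
  obtain A b rest where ls2: "ls2 = (A, b) # rest" using l2 by (cases ls2) auto
  \<comment> \<open>the output layer of f is merged into the first layer of g\<close>
  define A' where "A' i j = (\<Sum>k<M. A i k * C1 k j)" for i j
  define b' where "b' i = (\<Sum>k<M. A i k * c1 k) + b i" for i
  define ls where "ls = ls1 @ (A', b') # rest"
  have "hidden_layers d W ls x = hidden_layers M W ls2 (f x)" for x
  proof -
    define h where "h = hidden_layers d W ls1 x"
    have "(\<Sum>j<W. A' i j * h j) + b' i = (\<Sum>k<M. A i k * ((\<Sum>j<W. C1 k j * h j) + c1 k)) + b i" for i
    proof -
      have "(\<Sum>j<W. A' i j * h j) = (\<Sum>k<M. \<Sum>j<W. A i k * C1 k j * h j)"
        by (simp add: A'_def sum_distrib_right sum.swap[of _ "{..<W}"])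
      thus ?thesis by (simp add: b'_def distrib_left sum.distrib sum_distrib_left mult.assoc)
    qed
    hence "relu_layer W A' b' h = relu_layer M A b (\<lambda>k. (\<Sum>j<W. C1 k j * h j) + c1 k)"
      by (simp add: relu_layer_def)
    also have "\<dots> = relu_layer M A b (f x)" using f by (simp add: relu_layer_def h_def)
    finally have "relu_layer W A' b' h = relu_layer M A b (f x)" .
    moreover have "ls1 \<noteq> []" using l1 by auto
    ultimately show ?thesis by (simp add: ls_def ls2 hidden_layers_append h_def)
  qed
  hence "\<forall>x. \<forall>i<N. g (f x) i = (\<Sum>j<W. C2 i j * hidden_layers d W ls x j) + c2 i" using g by simp
  moreover have "length ls = L1 + L2" using l1 l2 ls2 by (simp add: ls_def)
  ultimately show ?thesis using l1 unfolding net_realizes_def by auto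
qed

lemma net_realizes_funpow:
  assumes "net_realizes W L M M f" "1 \<le> n"
  shows "net_realizes W (n * L) M M (f ^^ n)"
  using assms(2)
proof (induction n rule: dec_induct)
  case (step n)
  thus ?case using net_realizes_comp[OF step.IH assms(1)] by (simp add: add.commute)
qed (use assms(1) in simp)

lemma sum_lessThan_add:
  fixes m n :: nat
  shows "(\<Sum>k<m + n. f k) = (\<Sum>k<m. f k) + (\<Sum>k<n. f (m + k) :: 'a::comm_monoid_add)"
  by (induction n) (simp_all add: add.assoc)

definition vconcat :: "nat \<Rightarrow> (nat \<Rightarrow> 'a) \<Rightarrow> (nat \<Rightarrow> 'a) \<Rightarrow> nat \<Rightarrow> 'a" where
  "vconcat n u v = (\<lambda>j. if j < n then u j else v (j - n))"

definition stack_layer :: "nat \<Rightarrow> layer \<Rightarrow> layer \<Rightarrow> layer" where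
  "stack_layer W1 l1 l2 = (vconcat W1 (fst l1) (fst l2), vconcat W1 (snd l1) (snd l2))"

definition diag_layer :: "nat \<Rightarrow> layer \<Rightarrow> layer \<Rightarrow> layer" where
  "diag_layer W1 l1 l2 =
     (vconcat W1 (\<lambda>i. vconcat W1 (fst l1 i) (\<lambda>_. 0)) (\<lambda>i. vconcat W1 (\<lambda>_. 0) (fst l2 i)),
      vconcat W1 (snd l1) (snd l2))"

lemma relu_layer_stack_layer:
  "relu_layer d (fst (stack_layer W1 l1 l2)) (snd (stack_layer W1 l1 l2)) x =
     vconcat W1 (relu_layer d (fst l1) (snd l1) x) (relu_layer d (fst l2) (snd l2) x)"
  by (auto simp: relu_layer_def stack_layer_def vconcat_def)

lemma relu_layer_diag_layer:
  "relu_layer (W1 + W2) (fst (diag_layer W1 l1 l2)) (snd (diag_layer W1 l1 l2)) (vconcat W1 u v) =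
     vconcat W1 (relu_layer W1 (fst l1) (snd l1) u) (relu_layer W2 (fst l2) (snd l2) v)"
proof
  fix i
  have "(\<Sum>j<W1 + W2. vconcat W1 (fst l1 k) (\<lambda>_. 0) j * vconcat W1 u v j) = (\<Sum>j<W1. fst l1 k j * u j)"
    "(\<Sum>j<W1 + W2. vconcat W1 (\<lambda>_. 0) (fst l2 k) j * vconcat W1 u v j) = (\<Sum>j<W2. fst l2 k j * v j)"
    for k by (simp_all add: sum_lessThan_add vconcat_def)
  thus "relu_layer (W1 + W2) (fst (diag_layer W1 l1 l2)) (snd (diag_layer W1 l1 l2)) (vconcat W1 u v) i =
     vconcat W1 (relu_layer W1 (fst l1) (snd l1) u) (relu_layer W2 (fst l2) (snd l2) v) i"
    by (simp add: relu_layer_def diag_layer_def vconcat_def)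
qed

lemma hidden_layers_diag_layers:
  "length ls1 = length ls2 \<Longrightarrow>
   hidden_layers (W1 + W2) (W1 + W2) (map2 (diag_layer W1) ls1 ls2) (vconcat W1 u v) =
     vconcat W1 (hidden_layers W1 W1 ls1 u) (hidden_layers W2 W2 ls2 v)"
proof (induction ls1 arbitrary: ls2 u v)
  case (Cons l1 ls1)
  then obtain l2 ls2' where "ls2 = l2 # ls2'" by (cases ls2) auto
  thus ?case using Cons by (simp add: hidden_layers_Cons relu_layer_diag_layer)
qed simp

definition par_layers :: "nat \<Rightarrow> layer list \<Rightarrow> layer list \<Rightarrow> layer list" where
  "par_layers W1 ls1 ls2 = stack_layer W1 (hd ls1) (hd ls2) # map2 (diag_layer W1) (tl ls1) (tl ls2)"

lemma hidden_layers_par_layers: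
  assumes "ls1 \<noteq> []" "length ls1 = length ls2"
  shows "hidden_layers d (W1 + W2) (par_layers W1 ls1 ls2) x =
     vconcat W1 (hidden_layers d W1 ls1 x) (hidden_layers d W2 ls2 x)"
proof -
  obtain l1 ls1' l2 ls2' where "ls1 = l1 # ls1'" "ls2 = l2 # ls2'"
    using assms by (cases ls1; cases ls2) auto
  thus ?thesis using assms
    by (simp add: par_layers_def hidden_layers_Cons relu_layer_stack_layer hidden_layers_diag_layers)
qed

lemma net_realizes_vconcat:
  assumes "net_realizes W1 L d N1 f" "net_realizes W2 L d N2 g"
  shows "net_realizes (W1 + W2) L d (N1 + N2) (\<lambda>x. vconcat N1 (f x) (g x))"
proof -
  obtain ls1 C1 c1 where l1: "length ls1 = L" "1 \<le> L"
    and f: "\<forall>x. \<forall>i<N1. f x i = (\<Sum>j<W1. C1 i j * hidden_layers d W1 ls1 x j) + c1 i"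
    using assms(1) unfolding net_realizes_def by blast
  obtain ls2 C2 c2 where l2: "length ls2 = L"
    and g: "\<forall>x. \<forall>i<N2. g x i = (\<Sum>j<W2. C2 i j * hidden_layers d W2 ls2 x j) + c2 i"
    using assms(2) unfolding net_realizes_def by blast
  define C where "C = vconcat N1 (\<lambda>i. vconcat W1 (C1 i) (\<lambda>_. 0)) (\<lambda>i. vconcat W1 (\<lambda>_. 0) (C2 i))"
  have "ls1 \<noteq> []" using l1 by auto
  hence "vconcat N1 (f x) (g x) i =
      (\<Sum>j<W1 + W2. C i j * hidden_layers d (W1 + W2) (par_layers W1 ls1 ls2) x j) + vconcat N1 c1 c2 i"
    if "i < N1 + N2" for x i
    using that f g l1 l2
    by (auto simp: hidden_layers_par_layers C_def vconcat_def sum_lessThan_add)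
  moreover have "length (par_layers W1 ls1 ls2) = L" using l1 l2 by (simp add: par_layers_def)
  ultimately show ?thesis using l1 unfolding net_realizes_def by blast
qed

lemma net_realizes_no_outputs: "1 \<le> L \<Longrightarrow> net_realizes W L d 0 f"
  unfolding net_realizes_def by (auto intro: exI[of _ "replicate L id_layer"])

lemma net_realizes_widen:
  assumes "net_realizes W L d N f" "W \<le> W'"
  shows "net_realizes W' L d N f"
proof -
  have "1 \<le> L" using assms(1) unfolding net_realizes_def by simp
  hence "net_realizes (W + (W' - W)) L d (N + 0) (\<lambda>x. vconcat N (f x) (f x))"
    by (intro net_realizes_vconcat assms(1) net_realizes_no_outputs)
  thus ?thesis using assms(2) by (auto simp: vconcat_def elim: net_realizes_cong)
qed

definition realizable :: "nat \<Rightarrow> nat \<Rightarrow> ((nat \<Rightarrow> real) \<Rightarrow> (nat \<Rightarrow> real)) \<Rightarrow> bool" where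
  "realizable d N f \<longleftrightarrow> (\<exists>W L. net_realizes W L d N f)"

definition scalar_realizable :: "nat \<Rightarrow> ((nat \<Rightarrow> real) \<Rightarrow> real) \<Rightarrow> bool" where
  "scalar_realizable d \<phi> \<longleftrightarrow> realizable d 1 (\<lambda>x _. \<phi> x)"

lemma realizable_cong:
  "realizable d N f \<Longrightarrow> (\<And>x i. i < N \<Longrightarrow> f x i = g x i) \<Longrightarrow> realizable d N g"
  unfolding realizable_def using net_realizes_cong by blast

lemma realizable_comp:
  assumes "realizable d M f" "realizable M N g"
  shows "realizable d N (\<lambda>x. g (f x))"
proof -
  obtain W1 L1 W2 L2 where "net_realizes W1 L1 d M f" "net_realizes W2 L2 M N g"
    using assms unfolding realizable_def by blast
  hence "net_realizes (max W1 W2) L1 d M f" "net_realizes (max W1 W2) L2 M N g"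
    by (auto elim: net_realizes_widen)
  thus ?thesis unfolding realizable_def using net_realizes_comp by blast
qed

lemma realizable_vconcat:
  assumes "realizable d N1 f" "realizable d N2 g"
  shows "realizable d (N1 + N2) (\<lambda>x. vconcat N1 (f x) (g x))"
proof -
  obtain W1 L1 W2 L2 where "net_realizes W1 L1 d N1 f" "net_realizes W2 L2 d N2 g"
    using assms unfolding realizable_def by blast
  hence "net_realizes W1 (max L1 L2) d N1 f" "net_realizes W2 (max L1 L2) d N2 g"
    by (auto elim: net_realizes_deepen)
  thus ?thesis unfolding realizable_def using net_realizes_vconcat by blast
qed

lemma realizable_componentwise:
  "(\<And>i. i < N \<Longrightarrow> scalar_realizable d (\<lambda>x. f x i)) \<Longrightarrow> realizable d N f"
proof (induction N)
  case 0
  show ?case unfolding realizable_def using net_realizes_no_outputs[of 1] by blast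
next
  case (Suc N)
  have "realizable d (N + 1) (\<lambda>x. vconcat N (f x) (\<lambda>_. f x N))"
    using Suc unfolding scalar_realizable_def by (intro realizable_vconcat) simp_all
  hence "realizable d (Suc N) (\<lambda>x. vconcat N (f x) (\<lambda>_. f x N))" by simp
  thus ?case by (rule realizable_cong) (auto simp: vconcat_def less_Suc_eq)
qed

lemma scalar_realizable_comp:
  "realizable d M f \<Longrightarrow> scalar_realizable M \<phi> \<Longrightarrow> scalar_realizable d (\<lambda>x. \<phi> (f x))"
  unfolding scalar_realizable_def by (rule realizable_comp)

lemma scalar_realizable_pair_comp:
  assumes "scalar_realizable 2 (\<lambda>x. h (x 0, x 1))" "scalar_realizable d \<phi>" "scalar_realizable d \<psi>"
  shows "scalar_realizable d (\<lambda>x. h (\<phi> x, \<psi> x))"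
proof -
  have "realizable d 2 (\<lambda>x. vec2 (\<phi> x) (\<psi> x))"
    using assms(2,3) by (intro realizable_componentwise) (auto simp: vec2_def less_2_cases_iff)
  from scalar_realizable_comp[OF this assms(1)] show ?thesis by (simp add: vec2_def)
qed

lemma scalar_realizable_affine: "scalar_realizable d (\<lambda>x. (\<Sum>j<d. w j * x j) + c)"
proof -
  define A where "A k j = (if k = 0 then w j else - w j)" for k j :: nat
  define b where "b k = (if k = 0 then c else - c)" for k :: nat
  have "net_realizes 2 1 d 1
      (\<lambda>x i. (\<Sum>k<2. (if k = 0 then 1 else -1) * relu ((\<Sum>j<d. A k j * x j) + b k)) + 0)"
    by (rule net_realizes_single_layer)
  hence "net_realizes 2 1 d 1 (\<lambda>x i. (\<Sum>j<d. w j * x j) + c)"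
    by (elim net_realizes_cong) (simp add: A_def b_def numeral_2_eq_2 sum_negf relu_def max_def)
  thus ?thesis unfolding scalar_realizable_def realizable_def by blast
qed

lemma scalar_realizable_coord_affine: "p < d \<Longrightarrow> scalar_realizable d (\<lambda>x. a * x p + c)"
  using scalar_realizable_affine[of d "\<lambda>j. if j = p then a else 0" c]
  by (simp add: if_distrib[of "\<lambda>a. a * _"] cong: if_cong)

lemma scalar_realizable_coord: "p < d \<Longrightarrow> scalar_realizable d (\<lambda>x. x p)"
  using scalar_realizable_coord_affine[of p d 1 0] by simp

lemma scalar_realizable_min:
  assumes "scalar_realizable d \<phi>" "scalar_realizable d \<psi>"
  shows "scalar_realizable d (\<lambda>x. min (\<phi> x) (\<psi> x))"
proof -
  \<comment> \<open>min a b = relu a - relu (- a) - relu (a - b)\<close>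
  define A :: "nat \<Rightarrow> nat \<Rightarrow> real"
    where "A k j = (if k = 0 then (if j = 0 then 1 else 0) else if k = 1 then (if j = 0 then -1 else 0)
     else (if j = 0 then 1 else -1))" for k j
  have "net_realizes 3 1 2 1
      (\<lambda>x i. (\<Sum>k<3. (if k = 0 then 1 else -1) * relu ((\<Sum>j<2. A k j * x j) + 0)) + 0)"
    by (rule net_realizes_single_layer)
  hence "net_realizes 3 1 2 1 (\<lambda>x i. min (x 0) (x 1))"
    by (elim net_realizes_cong) (simp add: A_def eval_nat_numeral relu_def)
  hence "scalar_realizable 2 (\<lambda>x. (\<lambda>(a, b). min a b) (x 0, x 1))"
    unfolding scalar_realizable_def realizable_def by auto
  from scalar_realizable_pair_comp[OF this assms] show ?thesis by simp
qed

lemma scalar_realizable_max: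
  assumes "scalar_realizable d \<phi>" "scalar_realizable d \<psi>"
  shows "scalar_realizable d (\<lambda>x. max (\<phi> x) (\<psi> x))"
proof -
  \<comment> \<open>max a b = relu a - relu (- a) + relu (b - a)\<close>
  define A :: "nat \<Rightarrow> nat \<Rightarrow> real"
    where "A k j = (if k = 0 then (if j = 0 then 1 else 0) else if k = 1 then (if j = 0 then -1 else 0)
     else (if j = 0 then -1 else 1))" for k j
  have "net_realizes 3 1 2 1
      (\<lambda>x i. (\<Sum>k<3. (if k = 1 then -1 else 1) * relu ((\<Sum>j<2. A k j * x j) + 0)) + 0)"
    by (rule net_realizes_single_layer)
  hence "net_realizes 3 1 2 1 (\<lambda>x i. max (x 0) (x 1))"
    by (elim net_realizes_cong) (simp add: A_def eval_nat_numeral relu_def)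
  hence "scalar_realizable 2 (\<lambda>x. (\<lambda>(a, b). max a b) (x 0, x 1))"
    unfolding scalar_realizable_def realizable_def by auto
  from scalar_realizable_pair_comp[OF this assms] show ?thesis by simp
qed

lemma scalar_realizable_Min:
  assumes "finite T" "T \<noteq> {}" "\<And>t. t \<in> T \<Longrightarrow> scalar_realizable d (\<phi> t)"
  shows "scalar_realizable d (\<lambda>x. Min ((\<lambda>t. \<phi> t x) ` T))"
  using assms
proof (induction T rule: finite_ne_induct)
  case (insert t T)
  hence "scalar_realizable d (\<lambda>x. min (\<phi> t x) (Min ((\<lambda>t. \<phi> t x) ` T)))"
    by (intro scalar_realizable_min) auto
  thus ?case using insert by simp
qed simp

lemma scalar_realizable_Max:
  assumes "finite T" "T \<noteq> {}" "\<And>t. t \<in> T \<Longrightarrow> scalar_realizable d (\<phi> t)"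
  shows "scalar_realizable d (\<lambda>x. Max ((\<lambda>t. \<phi> t x) ` T))"
  using assms
proof (induction T rule: finite_ne_induct)
  case (insert t T)
  hence "scalar_realizable d (\<lambda>x. max (\<phi> t x) (Max ((\<lambda>t. \<phi> t x) ` T)))"
    by (intro scalar_realizable_max) auto
  thus ?case using insert by simp
qed simp

lemma scalar_realizable_affine_fun:
  fixes p :: "real \<times> real \<Rightarrow> real"
  assumes "affine_fun p"
  shows "scalar_realizable 2 (\<lambda>x. p (x 0, x 1))"
proof -
  obtain l c where l: "linear l" and p: "p = (\<lambda>z. l z + c)"
    using assms unfolding affine_fun_def by blast
  have l2: "l (a, b) = a * l (1, 0) + b * l (0, 1)" for a b
  proof -
    have "l (a, b) = l (a *\<^sub>R (1, 0) + b *\<^sub>R (0, 1))" by simp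
    also have "\<dots> = a *\<^sub>R l (1, 0) + b *\<^sub>R l (0, 1)" by (simp only: linear_add[OF l] linear_scale[OF l])
    finally show ?thesis by simp
  qed
  have "p (x 0, x 1) = (\<Sum>j<2. (if j = 0 then l (1, 0) else l (0, 1)) * x j) + c" for x :: "nat \<Rightarrow> real"
    using l2[of "x 0" "x 1"] by (simp add: p numeral_2_eq_2)
  hence eq: "(\<lambda>x. p (x 0, x 1)) = (\<lambda>x. (\<Sum>j::nat<2. (if j = 0 then l (1, 0) else l (0, 1)) * x j) + c)"
    by (rule ext)
  show ?thesis unfolding eq by (rule scalar_realizable_affine)
qed

lemma cpwl_scalar_realizable:
  fixes F :: "real \<times> real \<Rightarrow> 'b::euclidean_space" and \<pi> :: "'b \<Rightarrow> real"
  assumes "cpwl F" "linear \<pi>"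
  shows "scalar_realizable 2 (\<lambda>x. \<pi> (F (x 0, x 1)))"
proof -
  obtain A where fin: "finite A" and aff: "\<forall>p\<in>A. affine_fun p"
    and cover: "\<And>z. \<exists>p\<in>A. \<pi> (F z) = p z"
    using cpwl_affine_cover[OF assms] by blast
  have "continuous_on UNIV F" using assms(1) unfolding cpwl_def by blast
  hence cont: "continuous_on UNIV (\<lambda>z. \<pi> (F z))"
    using assms(2) by (rule linear_continuous_on_compose)
  define \<T> where "\<T> = range (\<lambda>y. {p\<in>A. \<pi> (F y) \<le> p y})"
  have "finite \<T>" unfolding \<T>_def by (rule finite_subset[of _ "Pow A"]) (auto simp: fin)
  moreover have "finite T" "T \<noteq> {}" if T: "T \<in> \<T>" for T
  proof -
    obtain y where y: "T = {p\<in>A. \<pi> (F y) \<le> p y}" using T unfolding \<T>_def by blast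
    thus "finite T" using fin by simp
    show "T \<noteq> {}" using cover[of y] y by force
  qed
  ultimately have "scalar_realizable 2 (\<lambda>x. Max ((\<lambda>T. Min ((\<lambda>p. p (x 0, x 1)) ` T)) ` \<T>))"
    using aff by (intro scalar_realizable_Max scalar_realizable_Min scalar_realizable_affine_fun)
      (auto simp: \<T>_def)
  moreover have "\<pi> (F z) = Max ((\<lambda>T. Min ((\<lambda>p. p z) ` T)) ` \<T>)" for z
    unfolding \<T>_def by (rule affine_cover_max_min[OF fin aff cont cover])
  ultimately show ?thesis by (simp only:)
qed

lemma cpwl_scalar_realizable_comp:
  fixes F :: "real \<times> real \<Rightarrow> 'b::euclidean_space" and \<pi> :: "'b \<Rightarrow> real"
  assumes "cpwl F" "linear \<pi>" "scalar_realizable d \<phi>" "scalar_realizable d \<psi>"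
  shows "scalar_realizable d (\<lambda>x. \<pi> (F (\<phi> x, \<psi> x)))"
  by (rule scalar_realizable_pair_comp[of "\<lambda>z. \<pi> (F z)",
        OF cpwl_scalar_realizable[OF assms(1,2)] assms(3,4)])

lemma relu_nets_iterate:
  assumes "realizable d M S" "realizable M M G" "realizable M N \<Phi>"
  obtains W C where "0 < W" "0 < C"
    "\<And>n. 1 \<le> n \<Longrightarrow> \<exists>g\<in>relu_nets W (C * n) d N. \<forall>x. \<forall>i<N. g x i = \<Phi> ((G ^^ n) (S x)) i"
proof -
  obtain W1 L1 W2 L2 W3 L3 where
    "net_realizes W1 L1 d M S" "net_realizes W2 L2 M M G" "net_realizes W3 L3 M N \<Phi>"
    using assms unfolding realizable_def by blast
  moreover define W where "W = max (max W1 W2) (max W3 1)"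
  ultimately have nets: "net_realizes W L1 d M S" "net_realizes W L2 M M G" "net_realizes W L3 M N \<Phi>"
    by (auto elim!: net_realizes_widen)
  hence "1 \<le> L1" "1 \<le> L3" unfolding net_realizes_def by auto
  define C where "C = L1 + L2 + L3"
  have "\<exists>g\<in>relu_nets W (C * n) d N. \<forall>x. \<forall>i<N. g x i = \<Phi> ((G ^^ n) (S x)) i" if "1 \<le> n" for n
  proof -
    have "net_realizes W (L1 + n * L2 + L3) d N (\<lambda>x. \<Phi> ((G ^^ n) (S x)))"
      using nets net_realizes_funpow[OF nets(2) that] by (intro net_realizes_comp)
    moreover have "L1 + n * L2 + L3 \<le> C * n"
    proof -
      have "L1 \<le> L1 * n" "L3 \<le> L3 * n" using that by simp_all
      moreover have "n * L2 = L2 * n" by simp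
      ultimately show ?thesis unfolding C_def add_mult_distrib by linarith
    qed
    ultimately have "net_realizes W (C * n) d N (\<lambda>x. \<Phi> ((G ^^ n) (S x)))"
      by (rule net_realizes_deepen)
    thus ?thesis by (elim net_realizes_relu_nets) blast
  qed
  moreover have "0 < W" "0 < C" using \<open>1 \<le> L1\<close> by (auto simp: W_def C_def)
  ultimately show thesis using that by blast
qed

section \<open>The doubling map and special atoms\<close>

lemma r_map_in_unit: "t \<in> {0..1} \<Longrightarrow> r_map t \<in> {0..1}"
  using frac_lt_1[of "2 * t"] frac_ge_0[of "2 * t"] by (auto simp: r_map_def frac_def)

lemma r_map_funpow_in_unit: "t \<in> {0..1} \<Longrightarrow> (r_map ^^ n) t \<in> {0..1}"
  by (induction n) (simp_all add: r_map_in_unit del: atLeastAtMost_iff)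

lemma R_map_funpow: "(R_map ^^ n) (x, y) = ((r_map ^^ n) x, (r_map ^^ n) y)"
  by (induction n) (simp_all add: R_map_def)

lemma funpow_E_map_semiconj:
  assumes "\<forall>t\<in>{0..1}. F (E_map t) = E_map (r_map t)" "t \<in> {0..1}"
  shows "(F ^^ n) (E_map t) = E_map ((r_map ^^ n) t)"
proof (induction n)
  case (Suc n)
  thus ?case using assms(1) r_map_funpow_in_unit[OF assms(2), of n] by simp
qed simp

lemma special_atom_support:
  assumes "special_atom \<rho> H" "H (a, b) \<noteq> 0"
  shows "a \<in> {\<rho>..1 - \<rho>}" "b \<in> {\<rho>..1 - \<rho>}"
proof -
  have "(a, b) \<in> closure {z. H z \<noteq> 0}" using assms(2) by (intro closure_subset[THEN subsetD]) simp
  moreover have "closure {z. H z \<noteq> 0} \<subseteq> cbox (\<rho>, \<rho>) (1 - \<rho>, 1 - \<rho>)"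
    using assms(1) unfolding special_atom_def by (elim conjE)
  ultimately have "(a, b) \<in> cbox (\<rho>, \<rho>) (1 - \<rho>, 1 - \<rho>)" by (rule subsetD[rotated])
  thus "a \<in> {\<rho>..1 - \<rho>}" "b \<in> {\<rho>..1 - \<rho>}" by (simp_all add: cbox_Pair_iff)
qed

lemma special_atom_nonneg: "special_atom \<rho> H \<Longrightarrow> 0 \<le> H z"
  unfolding special_atom_def by (elim conjE) (erule allE)

lemma retraction_choice:
  assumes "\<epsilon> < 1/2" and rm: "\<forall>t\<in>{\<epsilon>..1}. \<rho>m (E_map t) = t" and rp: "\<forall>t\<in>{0..1-\<epsilon>}. \<rho>p (E_map t) = t"
    and "a \<in> {0..1}"
  shows "\<exists>s\<in>{\<rho>m, \<rho>p}. s (E_map a) = a"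
proof (cases "\<epsilon> \<le> a")
  case True
  hence "\<rho>m (E_map a) = a" using rm assms(4) by simp
  thus ?thesis by blast
next
  case False
  hence "\<rho>p (E_map a) = a" using rp assms(1,4) by simp
  thus ?thesis by blast
qed

lemma special_atom_eq_Min_retractions:
  assumes "\<epsilon> < \<rho>" "\<rho> < 1/2" and H: "special_atom \<rho> H"
    and rm: "\<forall>t\<in>{\<epsilon>..1}. \<rho>m (E_map t) = t" and rp: "\<forall>t\<in>{0..1-\<epsilon>}. \<rho>p (E_map t) = t"
    and ab: "a \<in> {0..1}" "b \<in> {0..1}"
  shows "H (a, b) = Min ((\<lambda>(s, t). H (s (E_map a), t (E_map b))) ` ({\<rho>m, \<rho>p} \<times> {\<rho>m, \<rho>p}))"
proof (rule sym, rule Min_eqI)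
  fix v assume "v \<in> (\<lambda>(s, t). H (s (E_map a), t (E_map b))) ` ({\<rho>m, \<rho>p} \<times> {\<rho>m, \<rho>p})"
  then obtain s t where st: "s \<in> {\<rho>m, \<rho>p}" "t \<in> {\<rho>m, \<rho>p}" "v = H (s (E_map a), t (E_map b))"
    by auto
  show "H (a, b) \<le> v"
  proof (cases "H (a, b) = 0")
    case True
    thus ?thesis using special_atom_nonneg[OF H] st(3) by simp
  next
    \<comment> \<open>on the support of H both retractions are exact\<close>
    case False
    hence "a \<in> {\<rho>..1 - \<rho>}" "b \<in> {\<rho>..1 - \<rho>}" by (rule special_atom_support[OF H])+
    hence "a \<in> {\<epsilon>..1-\<epsilon>}" "b \<in> {\<epsilon>..1-\<epsilon>}" using assms(1) by auto
    hence "s (E_map a) = a" "t (E_map b) = b" using st(1,2) rm rp ab by auto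
    thus ?thesis using st(3) by simp
  qed
next
  have "\<epsilon> < 1/2" using assms(1,2) by simp
  then obtain s t where "s \<in> {\<rho>m, \<rho>p}" "s (E_map a) = a" "t \<in> {\<rho>m, \<rho>p}" "t (E_map b) = b"
    using retraction_choice[OF _ rm rp] ab by meson
  hence "H (a, b) = (\<lambda>(s, t). H (s (E_map a), t (E_map b))) (s, t)" "(s, t) \<in> {\<rho>m, \<rho>p} \<times> {\<rho>m, \<rho>p}"
    by (simp, blast)
  thus "H (a, b) \<in> (\<lambda>(s, t). H (s (E_map a), t (E_map b))) ` ({\<rho>m, \<rho>p} \<times> {\<rho>m, \<rho>p})"
    by (rule image_eqI)
qed simp

lemma special_atom_R_map_funpow_eq_Min:
  assumes "\<epsilon> < \<rho>" "\<rho> < 1/2" "special_atom \<rho> H"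
    and "\<forall>t\<in>{\<epsilon>..1}. \<rho>m (E_map t) = t" "\<forall>t\<in>{0..1-\<epsilon>}. \<rho>p (E_map t) = t"
    and F: "\<forall>t\<in>{0..1}. F (E_map t) = E_map (r_map t)"
    and xy: "x \<in> {0..1}" "y \<in> {0..1}"
  shows "H ((R_map ^^ n) (x, y)) =
    Min ((\<lambda>(s, t). H (s ((F ^^ n) (E_map x)), t ((F ^^ n) (E_map y)))) ` ({\<rho>m, \<rho>p} \<times> {\<rho>m, \<rho>p}))"
  unfolding R_map_funpow funpow_E_map_semiconj[OF F xy(1)] funpow_E_map_semiconj[OF F xy(2)]
  by (intro special_atom_eq_Min_retractions[OF assms(1-5)] r_map_funpow_in_unit xy)

section \<open>Networks along the orbit of the curve E\<close>

definition vec4 :: "real \<times> real \<Rightarrow> real \<times> real \<Rightarrow> nat \<Rightarrow> real" where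
  "vec4 z w = (\<lambda>i. if i = 0 then fst z else if i = 1 then snd z else if i = 2 then fst w else snd w)"

lemma vec4_simps [simp]:
  "vec4 z w 0 = fst z" "vec4 z w (Suc 0) = snd z" "vec4 z w 2 = fst w" "vec4 z w 3 = snd w"
  by (simp_all add: vec4_def)

lemma realizable_vec4:
  assumes "scalar_realizable d (\<lambda>x. fst (f x))" "scalar_realizable d (\<lambda>x. snd (f x))"
    "scalar_realizable d (\<lambda>x. fst (g x))" "scalar_realizable d (\<lambda>x. snd (g x))"
  shows "realizable d 4 (\<lambda>x. vec4 (f x) (g x))"
proof (rule realizable_componentwise)
  fix i :: nat assume "i < 4"
  hence "i = 0 \<or> i = 1 \<or> i = 2 \<or> i = 3" by auto
  thus "scalar_realizable d (\<lambda>x. vec4 (f x) (g x) i)" using assms by (auto simp: vec4_def)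
qed

lemma E_map_min_max: "E_map t = (min (min 1 (3 * t)) (3 - 3 * t), min (3 * t) (max 0 (2 - 3 * t)))"
  by (auto simp: E_map_def min_def max_def)

lemma realizable_E_map_pair: "realizable 2 4 (\<lambda>x. vec4 (E_map (x 0)) (E_map (x 1)))"
proof -
  have "scalar_realizable 2 (\<lambda>x. fst (E_map (x p)))" "scalar_realizable 2 (\<lambda>x. snd (E_map (x p)))"
    if "p < 2" for p
  proof -
    have aff: "scalar_realizable 2 (\<lambda>x. a * x p + c)" for a c
      using that by (rule scalar_realizable_coord_affine)
    have "(\<lambda>x. fst (E_map (x p))) = (\<lambda>x. min (min (0 * x p + 1) (3 * x p + 0)) (-3 * x p + 3))"
      "(\<lambda>x. snd (E_map (x p))) = (\<lambda>x. min (3 * x p + 0) (max (0 * x p + 0) (-3 * x p + 2)))"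
      by (simp_all add: E_map_min_max)
    thus "scalar_realizable 2 (\<lambda>x. fst (E_map (x p)))" "scalar_realizable 2 (\<lambda>x. snd (E_map (x p)))"
      by (simp_all only:) (intro scalar_realizable_min scalar_realizable_max aff)+
  qed
  thus ?thesis by (intro realizable_vec4) simp_all
qed

lemma realizable_cpwl_pair_map:
  fixes F :: "real \<times> real \<Rightarrow> real \<times> real"
  assumes "cpwl F"
  shows "realizable 4 4 (\<lambda>x. vec4 (F (x 0, x 1)) (F (x 2, x 3)))"
proof -
  have "scalar_realizable 4 (\<lambda>x. \<pi> (F (x p, x q)))" if "linear \<pi>" "p < 4" "q < 4" for \<pi> p q
    using that by (intro cpwl_scalar_realizable_comp[OF assms] scalar_realizable_coord)
  thus ?thesis by (intro realizable_vec4) (simp_all add: linear_fst linear_snd)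
qed

lemma funpow_vec4:
  "((\<lambda>x. vec4 (F (x 0, x 1)) (F (x 2, x 3))) ^^ n) (vec4 z w) = vec4 ((F ^^ n) z) ((F ^^ n) w)"
  by (induction n) simp_all

lemma scalar_realizable_Min_pair_maps:
  fixes H :: "real \<times> real \<Rightarrow> real" and \<R> :: "(real \<times> real \<Rightarrow> real) set"
  assumes "cpwl H" "finite \<R>" "\<R> \<noteq> {}" "\<forall>s\<in>\<R>. cpwl s"
  shows "scalar_realizable 4 (\<lambda>x. Min ((\<lambda>(s, t). H (s (x 0, x 1), t (x 2, x 3))) ` (\<R> \<times> \<R>)))"
proof -
  have "scalar_realizable 4 (\<lambda>x. s (x p, x q))" if "s \<in> \<R>" "p < 4" "q < 4" for s p q
    using cpwl_scalar_realizable_comp[OF _ linear_ident scalar_realizable_coord scalar_realizable_coord]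
      assms(4) that by blast
  hence "scalar_realizable 4 (\<lambda>x. H (s (x 0, x 1), t (x 2, x 3)))" if "s \<in> \<R>" "t \<in> \<R>" for s t
    using cpwl_scalar_realizable_comp[OF assms(1) linear_ident] that by simp
  thus ?thesis using assms(2,3) by (intro scalar_realizable_Min) (auto simp: case_prod_beta)
qed

lemma relu_nets_Min_pair_maps_orbit:
  fixes H :: "real \<times> real \<Rightarrow> real" and F :: "real \<times> real \<Rightarrow> real \<times> real"
    and \<R> :: "(real \<times> real \<Rightarrow> real) set"
  assumes "cpwl H" "cpwl F" "finite \<R>" "\<R> \<noteq> {}" "\<forall>s\<in>\<R>. cpwl s"
  obtains W C where "0 < W" "0 < C"
    "\<And>n. 1 \<le> n \<Longrightarrow> \<exists>g\<in>relu_nets W (C * n) 2 1. \<forall>x y.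
       g (vec2 x y) 0 = Min ((\<lambda>(s, t). H (s ((F ^^ n) (E_map x)), t ((F ^^ n) (E_map y)))) ` (\<R> \<times> \<R>))"
proof -
  define \<Phi> where "\<Phi> v = Min ((\<lambda>(s, t). H (s (v 0, v 1), t (v 2, v 3))) ` (\<R> \<times> \<R>))"
    for v :: "nat \<Rightarrow> real"
  have "realizable 4 1 (\<lambda>v _. \<Phi> v)"
    using scalar_realizable_Min_pair_maps[OF assms(1,3-5)] unfolding \<Phi>_def scalar_realizable_def .
  then obtain W C where "0 < W" "0 < C" and nets: "\<And>n. 1 \<le> n \<Longrightarrow> \<exists>g\<in>relu_nets W (C * n) 2 1.
      \<forall>v. \<forall>i<1. g v i = \<Phi> (((\<lambda>x. vec4 (F (x 0, x 1)) (F (x 2, x 3))) ^^ n) (vec4 (E_map (v 0)) (E_map (v 1))))"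
    using relu_nets_iterate[OF realizable_E_map_pair realizable_cpwl_pair_map[OF assms(2)]] by blast
  have "\<exists>g\<in>relu_nets W (C * n) 2 1. \<forall>x y.
      g (vec2 x y) 0 = Min ((\<lambda>(s, t). H (s ((F ^^ n) (E_map x)), t ((F ^^ n) (E_map y)))) ` (\<R> \<times> \<R>))"
    if n: "1 \<le> n" for n
  proof -
    obtain g where g: "g \<in> relu_nets W (C * n) 2 1"
      "\<forall>v. \<forall>i<1. g v i = \<Phi> (vec4 ((F ^^ n) (E_map (v 0))) ((F ^^ n) (E_map (v 1))))"
      using nets[OF n] unfolding funpow_vec4 by blast
    have "g (vec2 x y) 0 = Min ((\<lambda>(s, t). H (s ((F ^^ n) (E_map x)), t ((F ^^ n) (E_map y)))) ` (\<R> \<times> \<R>))"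
      for x y using g(2)[rule_format, where v = "vec2 x y" and i = 0] by (simp add: \<Phi>_def vec2_def)
    thus ?thesis using g(1) by blast
  qed
  thus thesis using that \<open>0 < W\<close> \<open>0 < C\<close> by blast
qed

theorem mainTheorem8:
  fixes \<epsilon> \<rho> :: real
    and H :: "real \<times> real \<Rightarrow> real"
    and \<rho>m \<rho>p :: "real \<times> real \<Rightarrow> real"
    and F :: "real \<times> real \<Rightarrow> real \<times> real"
  assumes eps: "0 < \<epsilon>" "\<epsilon> < \<rho>" "\<rho> < 1/2"
    and H: "special_atom \<rho> H"
    and rm: "cpwl \<rho>m" "\<forall>z. \<rho>m z \<in> {0..1}" "\<forall>t\<in>{\<epsilon>..1}. \<rho>m (E_map t) = t"
    and rp: "cpwl \<rho>p" "\<forall>z. \<rho>p z \<in> {0..1}" "\<forall>t\<in>{0..1-\<epsilon>}. \<rho>p (E_map t) = t"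
    and F: "cpwl F" "\<forall>t\<in>{0..1}. F (E_map t) = E_map (r_map t)"
  shows "(\<forall>n\<ge>1. \<forall>x\<in>{0..1}. \<forall>y\<in>{0..1}.
            (let z1 = (F ^^ n) (E_map x); z2 = (F ^^ n) (E_map y) in
             H ((R_map ^^ n) (x, y)) =
               Min ((\<lambda>(s, t). H (s z1, t z2)) ` ({\<rho>m, \<rho>p} \<times> {\<rho>m, \<rho>p}))))
       \<and> (\<exists>C0 C1 :: nat. 0 < C0 \<and> 0 < C1 \<and>
            (\<forall>n\<ge>1. \<exists>g\<in>relu_nets C0 (C1 * n) 2 1.
               \<forall>x\<in>{0..1}. \<forall>y\<in>{0..1}. g (vec2 x y) 0 = H ((R_map ^^ n) (x, y))))"
proof -
  have orbit: "H ((R_map ^^ n) (x, y)) =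
      Min ((\<lambda>(s, t). H (s ((F ^^ n) (E_map x)), t ((F ^^ n) (E_map y)))) ` ({\<rho>m, \<rho>p} \<times> {\<rho>m, \<rho>p}))"
    if "x \<in> {0..1}" "y \<in> {0..1}" for n x y
    by (rule special_atom_R_map_funpow_eq_Min[OF eps(2,3) H rm(3) rp(3) F(2) that])
  have "cpwl H" using H unfolding special_atom_def by blast
  then obtain W C where "0 < W" "0 < C" and nets: "\<And>n. 1 \<le> n \<Longrightarrow> \<exists>g\<in>relu_nets W (C * n) 2 1. \<forall>x y.
      g (vec2 x y) 0 = Min ((\<lambda>(s, t). H (s ((F ^^ n) (E_map x)), t ((F ^^ n) (E_map y)))) ` ({\<rho>m, \<rho>p} \<times> {\<rho>m, \<rho>p}))"
    using relu_nets_Min_pair_maps_orbit[of H F "{\<rho>m, \<rho>p}"] F(1) rm(1) rp(1) by auto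
  have "\<exists>g\<in>relu_nets W (C * n) 2 1. \<forall>x\<in>{0..1}. \<forall>y\<in>{0..1}. g (vec2 x y) 0 = H ((R_map ^^ n) (x, y))"
    if n: "1 \<le> n" for n
  proof -
    obtain g where "g \<in> relu_nets W (C * n) 2 1" "\<forall>x y. g (vec2 x y) 0 =
        Min ((\<lambda>(s, t). H (s ((F ^^ n) (E_map x)), t ((F ^^ n) (E_map y)))) ` ({\<rho>m, \<rho>p} \<times> {\<rho>m, \<rho>p}))"
      using nets[OF n] by blast
    thus ?thesis using orbit by (intro bexI[of _ g]) simp_all
  qed
  thus ?thesis using orbit \<open>0 < W\<close> \<open>0 < C\<close> unfolding Let_def by blast
qed

end
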